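(* Let $P=(N,L)$ be a filtration pair for an isolated invariant set $S$. If $x\in N$ satisfies $f^n(x)\in N\setminus L$ for all $n>0$, then $\omega(x)\subset S$.
   Context: Let $X$ be a locally compact metric space, $U\subset X$ open and $f:U\to X$ continuous. A solution through $x$ is a map $\sigma:\mathbb Z\to U$ with $\sigma(0)=x$ and $f(\sigma(n))=\sigma(n+1)$ for all $n$; for $N\subset U$, $\operatorname{Inv} N$ is the set of $x\in N$ admitting a solution through $x$ with all values in $N$. A compact $N\subset U$ is an isolating neighborhood if $\operatorname{Inv} N\subset\operatorname{Int} N$; $S$ is an isolated invariant set if $S=\operatorname{Inv} N$ for some isolating neighborhood $N$. The exit set of $N$ is $N^-=\{x\in N:f(x)\notin\operatorname{Int} N\}$. A filtration pair for an isolated invariant set $S$ is a pair of compact sets $L\subset N$ contained in the interior of the domain of $f$, each the closure of its interior, such that (1) $\operatorname{cl}(N\setminus L)$ is an isolating neighborhood with $\operatorname{Inv}\operatorname{cl}(N\setminus L)=S$; (2) $L$ is a neighborhood of $N^-$ in $N$; (3) $f(L)\cap\operatorname{cl}(N\setminus L)=\emptyset$. The $\omega$-limit set is $\omega(x)=\bigcap_{K>0}\operatorname{cl}\big(\bigcup_{n>K}\{f^n(x)\}\big)$. *)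

theory Defs
  imports "HOL-Analysis.Analysis"
begin

text \<open>The ambient locally compact metric space X is the type 'a (X = UNIV);
  f is a total HOL function but only its restriction to the open set U matters.\<close>

definition is_solution :: "'a set \<Rightarrow> ('a \<Rightarrow> 'a) \<Rightarrow> 'a \<Rightarrow> (int \<Rightarrow> 'a) \<Rightarrow> bool" where
  "is_solution U f x \<sigma> \<longleftrightarrow> \<sigma> 0 = x \<and> (\<forall>n. \<sigma> n \<in> U) \<and> (\<forall>n. f (\<sigma> n) = \<sigma> (n + 1))"

definition Inv :: "'a set \<Rightarrow> ('a \<Rightarrow> 'a) \<Rightarrow> 'a set \<Rightarrow> 'a set" where
  "Inv U f N = {x \<in> N. \<exists>\<sigma>. is_solution U f x \<sigma> \<and> (\<forall>n. \<sigma> n \<in> N)}"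

definition isolating_neighborhood :: "'a::metric_space set \<Rightarrow> ('a \<Rightarrow> 'a) \<Rightarrow> 'a set \<Rightarrow> bool" where
  "isolating_neighborhood U f N \<longleftrightarrow> compact N \<and> N \<subseteq> U \<and> Inv U f N \<subseteq> interior N"

definition isolated_invariant_set :: "'a::metric_space set \<Rightarrow> ('a \<Rightarrow> 'a) \<Rightarrow> 'a set \<Rightarrow> bool" where
  "isolated_invariant_set U f S \<longleftrightarrow> (\<exists>N. isolating_neighborhood U f N \<and> S = Inv U f N)"

definition exit_set :: "('a::metric_space \<Rightarrow> 'a) \<Rightarrow> 'a set \<Rightarrow> 'a set" where
  "exit_set f N = {x \<in> N. f x \<notin> interior N}"

definition filtration_pair ::
  "'a::metric_space set \<Rightarrow> ('a \<Rightarrow> 'a) \<Rightarrow> 'a set \<Rightarrow> 'a set \<Rightarrow> 'a set \<Rightarrow> bool" where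
  "filtration_pair U f S N L \<longleftrightarrow>
     compact N \<and> compact L \<and> L \<subseteq> N \<and> N \<subseteq> interior U \<and>
     closure (interior N) = N \<and> closure (interior L) = L \<and>
     isolating_neighborhood U f (closure (N - L)) \<and> Inv U f (closure (N - L)) = S \<and>
     (\<exists>V. openin (top_of_set N) V \<and> exit_set f N \<subseteq> V \<and> V \<subseteq> L) \<and>
     f ` L \<inter> closure (N - L) = {}"

definition omega_limit :: "('a::metric_space \<Rightarrow> 'a) \<Rightarrow> 'a \<Rightarrow> 'a set" where
  "omega_limit f x = (\<Inter>K\<in>{K::nat. K > 0}. closure (\<Union>n\<in>{n. n > K}. {(f ^^ n) x}))"

end

theory Submission
  imports Defs
begin

text \<open>The forward orbit of x stays in the compact isolating neighbourhood M = cl(N - L) of S,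
  so every point of the \<omega>-limit set lies in M and is a limit of orbit points along a subsequence.
  Continuity of f pushes such limits forward, and compactness of M lets one pull them back, so f
  maps \<omega>(x) onto itself. Choosing preimages inside \<omega>(x) then extends every point of \<omega>(x) to a
  full solution in M, hence \<omega>(x) \<subseteq> Inv M = S.\<close>

lemma omega_limit_iff_subseq:
  "y \<in> omega_limit f x \<longleftrightarrow> (\<exists>r. strict_mono r \<and> (\<lambda>k. (f ^^ r k) x) \<longlonglongrightarrow> y)"
proof
  assume y: "y \<in> omega_limit f x"
  have approx: "\<exists>n>K. dist ((f ^^ n) x) y < e" if "e > 0" for K e
  proof -
    have "y \<in> closure (\<Union>n\<in>{n. n > Suc K}. {(f ^^ n) x})"
      using y unfolding omega_limit_def by blast
    then obtain n where "n > Suc K" "dist ((f ^^ n) x) y < e"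
      using \<open>e > 0\<close> by (auto simp: closure_approachable)
    then show ?thesis
      using Suc_lessD by blast
  qed
  have "\<exists>r. \<forall>k. dist ((f ^^ r k) x) y < 1 / Suc k \<and> r k < r (Suc k)"
  proof (rule dependent_nat_choice)
    show "\<exists>n. dist ((f ^^ n) x) y < 1 / Suc 0"
      using approx[of 1 0] by auto
    show "\<exists>m. dist ((f ^^ m) x) y < 1 / Suc (Suc k) \<and> n < m" for n k
      using approx[of "1 / Suc (Suc k)" n] by auto
  qed
  then obtain r where r: "\<And>k. dist ((f ^^ r k) x) y < 1 / Suc k \<and> r k < r (Suc k)"
    by blast
  have "(\<lambda>k. dist ((f ^^ r k) x) y) \<longlonglongrightarrow> 0"
    by (rule LIMSEQ_norm_0) (use r in simp)
  then have "(\<lambda>k. (f ^^ r k) x) \<longlonglongrightarrow> y"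
    by (rule tendsto_dist_iff[THEN iffD2])
  moreover have "strict_mono r"
    using r by (simp add: strict_mono_Suc_iff)
  ultimately show "\<exists>r. strict_mono r \<and> (\<lambda>k. (f ^^ r k) x) \<longlonglongrightarrow> y"
    by blast
next
  assume "\<exists>r. strict_mono r \<and> (\<lambda>k. (f ^^ r k) x) \<longlonglongrightarrow> y"
  then obtain r where r: "strict_mono r" "(\<lambda>k. (f ^^ r k) x) \<longlonglongrightarrow> y" by blast
  show "y \<in> omega_limit f x"
    unfolding omega_limit_def
  proof (intro InterI, clarify)
    fix K :: nat
    have "(\<lambda>k. (f ^^ r (k + Suc K)) x) \<longlonglongrightarrow> y"
      using LIMSEQ_ignore_initial_segment[OF r(2)] .
    moreover have "(f ^^ r (k + Suc K)) x \<in> (\<Union>n\<in>{n. n > K}. {(f ^^ n) x})" for k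
      using seq_suble[OF r(1), of "k + Suc K"] by (intro UN_I[of "r (k + Suc K)"]) auto
    ultimately show "y \<in> closure (\<Union>n\<in>{n. n > K}. {(f ^^ n) x})"
      unfolding closure_sequential by (intro exI[of _ "\<lambda>k. (f ^^ r (k + Suc K)) x"]) simp
  qed
qed

lemma eventually_funpow_subseq_in:
  assumes "strict_mono r" "\<forall>n>0. (f ^^ n) x \<in> M"
  shows "\<forall>\<^sub>F k in sequentially. (f ^^ r k) x \<in> M"
  using eventually_subseq[OF assms(1) eventually_gt_at_top[of 0]] assms(2)
  by (auto elim: eventually_mono)

lemma omega_limit_subset:
  assumes "closed M" "\<forall>n>0. (f ^^ n) x \<in> M"
  shows "omega_limit f x \<subseteq> M"
proof
  fix y assume "y \<in> omega_limit f x"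
  then obtain r where r: "strict_mono r" "(\<lambda>k. (f ^^ r k) x) \<longlonglongrightarrow> y"
    by (auto simp: omega_limit_iff_subseq)
  show "y \<in> M"
    using Lim_in_closed_set[OF assms(1) eventually_funpow_subseq_in[OF r(1) assms(2)] _ r(2)]
    by simp
qed

lemma omega_limit_image_subset:
  assumes "closed M" "continuous_on M f" "\<forall>n>0. (f ^^ n) x \<in> M"
  shows "f ` omega_limit f x \<subseteq> omega_limit f x"
proof clarify
  fix y assume y: "y \<in> omega_limit f x"
  then obtain r where r: "strict_mono r" "(\<lambda>k. (f ^^ r k) x) \<longlonglongrightarrow> y"
    by (auto simp: omega_limit_iff_subseq)
  have "y \<in> M"
    using omega_limit_subset[OF assms(1,3)] y by blast
  have "(\<lambda>k. f ((f ^^ r k) x)) \<longlonglongrightarrow> f y"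
    using continuous_on_tendsto_compose[OF assms(2) r(2) \<open>y \<in> M\<close>
        eventually_funpow_subseq_in[OF r(1) assms(3)]] .
  then have "(\<lambda>k. (f ^^ Suc (r k)) x) \<longlonglongrightarrow> f y"
    by simp
  moreover have "strict_mono (\<lambda>k. Suc (r k))"
    using r(1) by (simp add: strict_mono_def)
  ultimately show "f y \<in> omega_limit f x"
    by (auto simp: omega_limit_iff_subseq)
qed

lemma omega_limit_subset_image:
  assumes "compact M" "continuous_on M f" "\<forall>n>0. (f ^^ n) x \<in> M"
  shows "omega_limit f x \<subseteq> f ` omega_limit f x"
proof
  fix y assume "y \<in> omega_limit f x"
  then obtain r where r: "strict_mono r" "(\<lambda>k. (f ^^ r k) x) \<longlonglongrightarrow> y"
    by (auto simp: omega_limit_iff_subseq)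
  \<comment> \<open>The shift by 2 makes s k positive, so that the orbit points at times s k lie in M.\<close>
  define s where "s k = r (k + 2) - 1" for k
  have Suc_s: "Suc (s k) = r (k + 2)" for k
    using seq_suble[OF r(1), of "k + 2"] by (simp add: s_def)
  have "strict_mono s"
    unfolding strict_mono_Suc_iff using Suc_s strict_monoD[OF r(1)]
    by (metis Suc_less_eq add_Suc lessI)
  have f_s: "f ((f ^^ s k) x) = (f ^^ r (k + 2)) x" for k
    by (metis Suc_s comp_apply funpow.simps(2))
  have s_in_M: "(f ^^ s k) x \<in> M" for k
    using assms(3) seq_suble[OF r(1), of "k + 2"] by (simp add: s_def)
  obtain z q where z: "z \<in> M" "strict_mono q" "(\<lambda>k. (f ^^ s (q k)) x) \<longlonglongrightarrow> z"
    using seq_compactE[OF compact_imp_seq_compact[OF assms(1)], of "\<lambda>k. (f ^^ s k) x"] s_in_M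
    by (auto simp: o_def)
  have "z \<in> omega_limit f x"
    using z(2,3) strict_mono_o[OF \<open>strict_mono s\<close> z(2)]
    by (auto simp: omega_limit_iff_subseq o_def)
  moreover have "f z = y"
  proof (rule LIMSEQ_unique)
    show "(\<lambda>k. f ((f ^^ s (q k)) x)) \<longlonglongrightarrow> f z"
      using continuous_on_tendsto_compose[OF assms(2) z(3) z(1)] s_in_M by simp
    have "strict_mono (\<lambda>k. q k + 2)"
      using z(2) by (simp add: strict_mono_def)
    from LIMSEQ_subseq_LIMSEQ[OF r(2) this]
    show "(\<lambda>k. f ((f ^^ s (q k)) x)) \<longlonglongrightarrow> y"
      by (simp only: f_s o_def)
  qed
  ultimately show "y \<in> f ` omega_limit f x"
    by blast
qed

lemma invariant_subset_Inv:
  assumes "f ` W = W" "W \<subseteq> N" "N \<subseteq> U"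
  shows "W \<subseteq> Inv U f N"
proof
  fix y assume y: "y \<in> W"
  have "\<forall>w\<in>W. \<exists>v\<in>W. f v = w"
    using assms(1) by (metis imageE)
  then obtain g where g: "\<And>w. w \<in> W \<Longrightarrow> g w \<in> W \<and> f (g w) = w"
    by metis
  have f_iter: "(f ^^ k) y \<in> W" for k
    by (induction k) (use y assms(1) in auto)
  have g_iter: "(g ^^ k) y \<in> W" for k
    by (induction k) (use y g in auto)
  define \<sigma> where "\<sigma> n = (if n \<ge> 0 then (f ^^ nat n) y else (g ^^ nat (- n)) y)" for n :: int
  have \<sigma>_in_W: "\<sigma> n \<in> W" for n
    unfolding \<sigma>_def using f_iter g_iter by simp
  have "f (\<sigma> n) = \<sigma> (n + 1)" for n
  proof (cases "n \<ge> 0")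
    case True
    then have "nat (n + 1) = Suc (nat n)" by simp
    with True show ?thesis unfolding \<sigma>_def by simp
  next
    case False
    then have "\<sigma> (n + 1) = (g ^^ nat (- (n + 1))) y"
      by (cases "n = -1") (simp_all add: \<sigma>_def)
    moreover have "nat (- n) = Suc (nat (- (n + 1)))"
      using False by simp
    ultimately have "\<sigma> n = g (\<sigma> (n + 1))"
      using False by (simp add: \<sigma>_def)
    then show ?thesis
      using g[OF \<sigma>_in_W] by simp
  qed
  moreover have "\<sigma> 0 = y"
    by (simp add: \<sigma>_def)
  ultimately show "y \<in> Inv U f N"
    unfolding Inv_def is_solution_def using y \<sigma>_in_W assms(2,3)
    by (intro CollectI conjI exI[of _ \<sigma>]) auto
qed

theorem mainTheorem8:
  fixes f :: "'a::metric_space \<Rightarrow> 'a" and U S N L :: "'a set" and x :: 'a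
  assumes "locally compact (UNIV :: 'a set)"
    and "open U" and "continuous_on U f"
    and "isolated_invariant_set U f S"
    and "filtration_pair U f S N L"
    and "x \<in> N"
    and "\<forall>n::nat. n > 0 \<longrightarrow> (f ^^ n) x \<in> N - L"
  shows "omega_limit f x \<subseteq> S"
proof -
  define M where "M = closure (N - L)"
  have "isolating_neighborhood U f M" and S: "S = Inv U f M"
    using assms(5) unfolding filtration_pair_def M_def by auto
  then have "compact M" and "M \<subseteq> U"
    unfolding isolating_neighborhood_def by auto
  have cont: "continuous_on M f"
    using continuous_on_subset[OF assms(3) \<open>M \<subseteq> U\<close>] .
  have orbit: "\<forall>n>0. (f ^^ n) x \<in> M"
    using assms(7) closure_subset unfolding M_def by blast
  have "f ` omega_limit f x = omega_limit f x"
    using omega_limit_image_subset[OF compact_imp_closed[OF \<open>compact M\<close>] cont orbit]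
      omega_limit_subset_image[OF \<open>compact M\<close> cont orbit] by blast
  moreover have "omega_limit f x \<subseteq> M"
    using omega_limit_subset[OF compact_imp_closed[OF \<open>compact M\<close>] orbit] .
  ultimately show ?thesis
    using invariant_subset_Inv \<open>M \<subseteq> U\<close> S by blast
qed

end
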